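(* Let $F_0$ be a joint input cdf of $(R_0,\Phi_0)$ with amplitude marginal $F_{R_0}$. Write $$p(r,\phi;F_0)=\int p(r,\phi\mid r_0,\phi_0)\,dF_0(r_0,\phi_0),\qquad p(r;F_{R_0})=\int p_{R|R_0}(r\mid r_0)\,dF_{R_0}(r_0).$$ (1) If $F_{R_0}\in\mathcal P$, then for all $r\ge0$: $$p(r,\phi;F_0)\le\frac{2k_ur}{\sigma^2\mathcal L}e^{-\frac{r^2-2r\rho}{\sigma^2\mathcal L}}.$$ (2) If $F_{R_0}\in\mathcal A$, then for all $r>0$ with $\mathcal C(r/2)>0$: $$p(r,\phi;F_0)\le\frac{2k_ur}{\sigma^2\mathcal L}\Big(e^{-\frac{r^2}{4\sigma^2\mathcal L}}+\frac{A}{\mathcal C(r/2)}\Big).$$ (3) If $F_{R_0}\in\mathcal F$, let $k_1=\int_0^\infty e^{-r_0^2/(\sigma^2\mathcal L)}\,dF_{R_0}(r_0)$. Then for all sufficiently large $r$: $$p(r,\phi;F_0)\ge\frac{k_1r}{\pi\sigma^2\mathcal L}e^{-\frac{r^2}{\sigma^2\mathcal L}}(1-\xi(r)).$$ Moreover, for all $r\ge0$: $$p(r;F_{R_0})\ge\frac{2k_1r}{\sigma^2\mathcal L}e^{-\frac{r^2}{\sigma^2\mathcal L}}.$$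
   Context: Fix constants $\gamma>0$, $\sigma>0$, $\mathcal L>0$, and let $j=\sqrt{-1}$. For $m\in\mathbb N$ let $\beta_m=\sqrt{m\gamma/2}\,\sigma\mathcal L$ and $$a_m=\frac{\sqrt{jm\gamma}}{\sigma}\coth\!\big(\sqrt{jm\gamma\sigma^2}\,\mathcal L\big),\qquad b_m=\frac{\sqrt{jm\gamma}}{\sigma}\,\frac{1}{\sinh\!\big(\sqrt{jm\gamma\sigma^2}\,\mathcal L\big)},$$ with principal square roots. $I_m$ denotes the modified Bessel function of the first kind of order $m$. The PZD channel conditional density (input polar coordinates $(r_0,\phi_0)$, output polar coordinates $(r,\phi)$) is $$p(r,\phi\mid r_0,\phi_0)=\frac{1}{2\pi}p_{R|R_0}(r\mid r_0)+\frac1\pi\sum_{m\ge1}\Re\!\Big(C_m(r,r_0)\,e^{jm(\phi-\phi_0-\gamma r_0^2\mathcal L)}\Big),$$ where $$p_{R|R_0}(r\mid r_0)=\frac{2r}{\sigma^2\mathcal L}e^{-\frac{r^2+r_0^2}{\sigma^2\mathcal L}}I_0\!\Big(\frac{2rr_0}{\sigma^2\mathcal L}\Big),\qquad C_m(r,r_0)=r\,b_m\,e^{-a_m(r^2+r_0^2)}I_m(2b_m r_0 r).$$ Define $$k_u=\frac{1}{2\pi}\Big(1+\sqrt2\sum_{m\ge1}\frac{\beta_m}{\sinh\beta_m}\Big),\qquad \xi(r)=\sqrt2\,e^{-\left(\Re(a_1)-\frac{1}{\sigma^2\mathcal L}\right)r^2}\sum_{m\ge1}\frac{\beta_m}{\sinh\beta_m}.$$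 Constraints. Fix $0<\rho<\infty$ and $0<A<\infty$. A function $\mathcal C:[0,\infty)\to[0,\infty)$ is an admissible cost if it satisfies two conditions: - (C1) it is lower semicontinuous and non-decreasing, with $\mathcal C(0)=0$ and $\lim_{r_0\to\infty}\mathcal C(r_0)=\infty$; - (C2) it extends analytically to a strip $\{z\in\mathbb C:|\Im z|<\delta\}$ for some $\delta>0$. The three sets of cdfs $F_{R_0}$ of $R_0$ are: - $\mathcal P=\{F_{R_0}:\int_0^\rho dF_{R_0}=1\}$; - $\mathcal A=\{F_{R_0}:\int_0^\infty\mathcal C\,dF_{R_0}\le A\}$ for an admissible cost with $\mathcal C(r_0)/r_0^2\to\infty$; - $\mathcal A'$, defined like $\mathcal A$ but with admissible $\mathcal C$ satisfying $\mathcal C(r_0)/\ln r_0\to\infty$. $\mathcal F$ denotes any one of $\mathcal P$, $\mathcal A$, $\mathcal P\cap\mathcal A'$. *)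

theory Defs
  imports "HOL-Analysis.Analysis" "HOL-Probability.Probability"
begin

definition besselI :: "nat \<Rightarrow> complex \<Rightarrow> complex" where
  "besselI m z = (\<Sum>k. (z / 2) ^ (2 * k + m) / of_real (fact k * fact (k + m)))"

definition ccoth :: "complex \<Rightarrow> complex" where
  "ccoth z = cosh z / sinh z"

definition beta_m :: "real \<Rightarrow> real \<Rightarrow> real \<Rightarrow> nat \<Rightarrow> real" where
  "beta_m \<gamma> \<sigma> L m = sqrt (real m * \<gamma> / 2) * \<sigma> * L"

definition a_m :: "real \<Rightarrow> real \<Rightarrow> real \<Rightarrow> nat \<Rightarrow> complex" where
  "a_m \<gamma> \<sigma> L m = csqrt (\<i> * of_nat m * of_real \<gamma>) / of_real \<sigma>
     * ccoth (csqrt (\<i> * of_nat m * of_real \<gamma> * of_real (\<sigma>^2)) * of_real L)"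

definition b_m :: "real \<Rightarrow> real \<Rightarrow> real \<Rightarrow> nat \<Rightarrow> complex" where
  "b_m \<gamma> \<sigma> L m = csqrt (\<i> * of_nat m * of_real \<gamma>) / of_real \<sigma>
     * (1 / sinh (csqrt (\<i> * of_nat m * of_real \<gamma> * of_real (\<sigma>^2)) * of_real L))"

definition pRR0 :: "real \<Rightarrow> real \<Rightarrow> real \<Rightarrow> real \<Rightarrow> real" where
  "pRR0 \<sigma> L r r0 = 2 * r / (\<sigma>^2 * L) * exp (- (r^2 + r0^2) / (\<sigma>^2 * L))
     * Re (besselI 0 (of_real (2 * r * r0 / (\<sigma>^2 * L))))"

definition Cm :: "real \<Rightarrow> real \<Rightarrow> real \<Rightarrow> nat \<Rightarrow> real \<Rightarrow> real \<Rightarrow> complex" where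
  "Cm \<gamma> \<sigma> L m r r0 = of_real r * b_m \<gamma> \<sigma> L m * exp (- a_m \<gamma> \<sigma> L m * of_real (r^2 + r0^2))
     * besselI m (2 * b_m \<gamma> \<sigma> L m * of_real (r0 * r))"

definition pcond :: "real \<Rightarrow> real \<Rightarrow> real \<Rightarrow> real \<Rightarrow> real \<Rightarrow> real \<Rightarrow> real \<Rightarrow> real" where
  "pcond \<gamma> \<sigma> L r \<phi> r0 \<phi>0 = 1 / (2 * pi) * pRR0 \<sigma> L r r0
     + 1 / pi * (\<Sum>n. Re (Cm \<gamma> \<sigma> L (Suc n) r r0
          * exp (\<i> * of_nat (Suc n) * of_real (\<phi> - \<phi>0 - \<gamma> * r0^2 * L))))"

definition k_u :: "real \<Rightarrow> real \<Rightarrow> real \<Rightarrow> real" where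
  "k_u \<gamma> \<sigma> L = 1 / (2 * pi) * (1 + sqrt 2 * (\<Sum>n. beta_m \<gamma> \<sigma> L (Suc n) / sinh (beta_m \<gamma> \<sigma> L (Suc n))))"

definition xi :: "real \<Rightarrow> real \<Rightarrow> real \<Rightarrow> real \<Rightarrow> real" where
  "xi \<gamma> \<sigma> L r = sqrt 2 * exp (- (Re (a_m \<gamma> \<sigma> L 1) - 1 / (\<sigma>^2 * L)) * r^2)
     * (\<Sum>n. beta_m \<gamma> \<sigma> L (Suc n) / sinh (beta_m \<gamma> \<sigma> L (Suc n)))"

text \<open>Output densities for a joint input distribution M on (r0, phi0), a probability measure
  on real \<times> real (Lebesgue-Stieltjes integral against the joint cdf F0).\<close>
definition p_out :: "real \<Rightarrow> real \<Rightarrow> real \<Rightarrow> (real \<times> real) measure \<Rightarrow> real \<Rightarrow> real \<Rightarrow> real" where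
  "p_out \<gamma> \<sigma> L M r \<phi> = (\<integral>x. pcond \<gamma> \<sigma> L r \<phi> (fst x) (snd x) \<partial>M)"

text \<open>p(r; F_R0): integral against the amplitude marginal F_R0 = distribution of fst under M.\<close>
definition p_amp :: "real \<Rightarrow> real \<Rightarrow> (real \<times> real) measure \<Rightarrow> real \<Rightarrow> real" where
  "p_amp \<sigma> L M r = (\<integral>r0. pRR0 \<sigma> L r r0 \<partial>(distr M lborel fst))"

definition admissible_cost :: "(real \<Rightarrow> real) \<Rightarrow> bool" where
  "admissible_cost C \<longleftrightarrow>
     (\<forall>x\<ge>0. C x \<ge> 0) \<and>
     (\<forall>x\<ge>0. \<forall>t. t < C x \<longrightarrow> (\<forall>\<^sub>F y in at x within {0..}. t < C y)) \<and>
     mono_on {0..} C \<and> C 0 = 0 \<and> filterlim C at_top at_top \<and>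
     (\<exists>\<delta>>0. \<exists>g. g holomorphic_on {z. \<bar>Im z\<bar> < \<delta>} \<and> (\<forall>x\<ge>0. g (of_real x) = of_real (C x)))"

definition in_P :: "real \<Rightarrow> real measure \<Rightarrow> bool" where
  "in_P \<rho> F \<longleftrightarrow> measure F {0..\<rho>} = 1"

definition in_A :: "(real \<Rightarrow> real) \<Rightarrow> real \<Rightarrow> real measure \<Rightarrow> bool" where
  "in_A C A F \<longleftrightarrow> admissible_cost C \<and> filterlim (\<lambda>r0. C r0 / r0^2) at_top at_top
     \<and> (\<integral>\<^sup>+ r0. ennreal (C r0) \<partial>F) \<le> ennreal A"

definition in_A' :: "(real \<Rightarrow> real) \<Rightarrow> real \<Rightarrow> real measure \<Rightarrow> bool" where
  "in_A' C A F \<longleftrightarrow> admissible_cost C \<and> filterlim (\<lambda>r0. C r0 / ln r0) at_top at_top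
     \<and> (\<integral>\<^sup>+ r0. ennreal (C r0) \<partial>F) \<le> ennreal A"

end

theory Submission
  imports Defs "HOL-Real_Asymp.Real_Asymp"
begin

text \<open>Write N0 = sigma^2 L and w = beta_m (1 + i). Then a_m = w coth w / N0 and
  b_m = w / (N0 sinh w), and Re (w coth w) = F (2 beta_m) with
  F t = t (sinh t + sin t) / (2 (cosh t - cos t)). Since cosh t - cos t has nonnegative Taylor
  coefficients, Chebyshev's sum inequality shows that F is increasing and F > 1; moreover
  |w / sinh w| <= min 1 (sqrt 2 beta_m / sinh beta_m). With |I_m z| <= I_0 |z| <= exp |z| this
  bounds the m-th Fourier term of the conditional density by
  sqrt 2 beta_m / (2 sinh beta_m) * exp (- (Re a_1 - 1 / N0) r^2) * p(r | r0), so the density lies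
  within xi(r) p(r | r0) / (2 pi) of p(r | r0) / (2 pi) and never exceeds k_u p(r | r0).
  Integrating against the input thus reduces everything to the amplitude density p(r; F_R0).
  There I_0 y <= exp y gives p(r | r0) <= 2 r / N0 * exp (- (r - r0)^2 / N0), which yields (1) on the
  support [0, rho] and (2) after splitting at r0 = r / 2 and applying Markov's inequality to the
  cost; I_0 >= 1 gives the lower bounds of (3).\<close>

section \<open>Taylor coefficients of \<open>cosh t - cos t\<close>\<close>

definition cosh_cos_coeff :: "nat \<Rightarrow> real" where
  "cosh_cos_coeff n = (if even n then 1 / fact n else 0) - cos_coeff n"

lemma sums_cosh_minus_cos: "(\<lambda>n. cosh_cos_coeff n * t ^ n) sums (cosh t - cos t)"
proof -
  have "(\<lambda>n. (if even n then t ^ n /\<^sub>R fact n else 0) - cos_coeff n *\<^sub>R t ^ n) sums (cosh t - cos t)"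
    by (intro sums_diff cosh_converges cos_converges)
  moreover have "(\<lambda>n. (if even n then t ^ n /\<^sub>R fact n else 0) - cos_coeff n *\<^sub>R t ^ n)
      = (\<lambda>n. cosh_cos_coeff n * t ^ n)"
    by (auto simp: cosh_cos_coeff_def fun_eq_iff field_simps)
  ultimately show ?thesis
    by simp
qed

lemma cosh_cos_coeff_nonneg: "cosh_cos_coeff n \<ge> 0"
proof -
  have "(-1::real) ^ k \<le> 1" for k
    by (cases "even k") auto
  then show ?thesis
    by (auto simp: cosh_cos_coeff_def cos_coeff_def divide_simps)
qed

lemma cosh_cos_coeff_simps:
  "cosh_cos_coeff 0 = 0" "cosh_cos_coeff 1 = 0" "cosh_cos_coeff 2 = 1" "cosh_cos_coeff 6 = 1 / 360"
  by (simp_all add: cosh_cos_coeff_def cos_coeff_def fact_numeral)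

lemma cosh_cos_coeff_Suc:
  "real (Suc n) * cosh_cos_coeff (Suc n) = (if even n then 0 else 1 / fact n) + sin_coeff n"
proof -
  have "real (Suc n) / fact (Suc n) = 1 / (fact n :: real)"
    by (simp add: divide_simps)
  then show ?thesis
    by (simp add: cosh_cos_coeff_def cos_coeff_Suc distrib_left del: fact_Suc)
qed

lemma sums_t_sinh_plus_sin: "(\<lambda>n. real n * cosh_cos_coeff n * t ^ n) sums (t * (sinh t + sin t))"
proof -
  have "(\<lambda>n. t * ((if even n then 0 else t ^ n /\<^sub>R fact n) + sin_coeff n *\<^sub>R t ^ n))
      sums (t * (sinh t + sin t))"
    by (intro sums_mult sums_add sinh_converges sin_converges)
  moreover have "(\<lambda>n. t * ((if even n then 0 else t ^ n /\<^sub>R fact n) + sin_coeff n *\<^sub>R t ^ n))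
      = (\<lambda>n. real (Suc n) * cosh_cos_coeff (Suc n) * t ^ Suc n)"
  proof
    fix n
    have "real (Suc n) * cosh_cos_coeff (Suc n) * t ^ Suc n = (real (Suc n) * cosh_cos_coeff (Suc n)) * (t * t ^ n)"
      by simp
    also have "\<dots> = t * ((if even n then 0 else t ^ n /\<^sub>R fact n) + sin_coeff n *\<^sub>R t ^ n)"
      by (simp only: cosh_cos_coeff_Suc) (cases "even n"; simp add: field_simps)
    finally show "t * ((if even n then 0 else t ^ n /\<^sub>R fact n) + sin_coeff n *\<^sub>R t ^ n)
        = real (Suc n) * cosh_cos_coeff (Suc n) * t ^ Suc n"
      by (rule sym)
  qed
  ultimately have "(\<lambda>n. real (Suc n) * cosh_cos_coeff (Suc n) * t ^ Suc n) sums (t * (sinh t + sin t))"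
    by simp
  then show ?thesis
    by (subst (asm) sums_Suc_iff) simp
qed

text \<open>Chebyshev's sum inequality: for nonnegative coefficients the ratio
  \<open>(\<Sum> n a\<^sub>n x\<^sup>n) / (\<Sum> a\<^sub>n x\<^sup>n)\<close> is nondecreasing in \<open>x \<ge> 0\<close>.\<close>

lemma chebyshev_power_sum:
  fixes a :: "nat \<Rightarrow> real"
  assumes a: "\<And>n. a n \<ge> 0" and y: "0 \<le> y" "y \<le> x"
  shows "(\<Sum>n<N. real n * a n * y ^ n) * (\<Sum>m<N. a m * x ^ m)
       \<le> (\<Sum>n<N. real n * a n * x ^ n) * (\<Sum>m<N. a m * y ^ m)"
proof -
  define g where "g n m = a n * a m * real n * (x ^ n * y ^ m - y ^ n * x ^ m)" for n m
  have g_sym_nonneg: "g n m + g m n \<ge> 0" if "m \<le> n" for n m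
  proof -
    have "x ^ m * y ^ m * y ^ (n - m) \<le> x ^ m * y ^ m * x ^ (n - m)"
      using y by (intro mult_left_mono power_mono) auto
    then have "y ^ n * x ^ m \<le> x ^ n * y ^ m"
      using that by (metis (no_types, lifting) le_add_diff_inverse mult.assoc mult.commute power_add)
    then have "0 \<le> a n * a m * ((real n - real m) * (x ^ n * y ^ m - y ^ n * x ^ m))"
      using a that by (intro mult_nonneg_nonneg) auto
    then show ?thesis
      by (simp add: g_def algebra_simps)
  qed
  have "(\<Sum>n<N. real n * a n * x ^ n) * (\<Sum>m<N. a m * y ^ m)
      - (\<Sum>n<N. real n * a n * y ^ n) * (\<Sum>m<N. a m * x ^ m) = (\<Sum>n<N. \<Sum>m<N. g n m)"
    by (simp add: g_def sum_distrib_left sum_distrib_right sum_subtractf[symmetric] algebra_simps)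
  moreover have "2 * (\<Sum>n<N. \<Sum>m<N. g n m) = (\<Sum>n<N. \<Sum>m<N. g n m + g m n)"
    using sum.swap[of g "{..<N}" "{..<N}"] by (simp add: sum.distrib)
  moreover have "\<dots> \<ge> 0"
    using g_sym_nonneg by (intro sum_nonneg) (metis add.commute nat_le_linear)
  ultimately show ?thesis
    by linarith
qed

lemma chebyshev_power_suminf:
  fixes a :: "nat \<Rightarrow> real"
  assumes "\<And>n. a n \<ge> 0" and "0 \<le> y" "y \<le> x"
    and "(\<lambda>n. real n * a n * y ^ n) sums V\<^sub>y" and "(\<lambda>n. a n * y ^ n) sums U\<^sub>y"
    and "(\<lambda>n. real n * a n * x ^ n) sums V\<^sub>x" and "(\<lambda>n. a n * x ^ n) sums U\<^sub>x"
  shows "V\<^sub>y * U\<^sub>x \<le> V\<^sub>x * U\<^sub>y"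
  using assms chebyshev_power_sum[of a y x]
  by (intro LIMSEQ_le[OF tendsto_mult tendsto_mult]) (auto simp: sums_def)

lemma sq_le_cosh_minus_cos: "(t::real) \<ge> 0 \<Longrightarrow> t\<^sup>2 \<le> cosh t - cos t"
  using sum_le_suminf[of "\<lambda>n. cosh_cos_coeff n * t ^ n" "{2}"] sums_cosh_minus_cos[of t]
  by (auto simp: sums_iff cosh_cos_coeff_simps cosh_cos_coeff_nonneg)

lemma cosh_minus_cos_pos: "(t::real) > 0 \<Longrightarrow> cosh t - cos t > 0"
  using sq_le_cosh_minus_cos[of t] by (smt (verit) zero_less_power)

lemma two_cosh_minus_cos_less: "(t::real) > 0 \<Longrightarrow> 2 * (cosh t - cos t) < t * (sinh t + sin t)"
proof -
  assume t: "t > 0"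
  define d where "d n = (real n - 2) * (cosh_cos_coeff n * t ^ n)" for n
  have "d sums (t * (sinh t + sin t) - 2 * (cosh t - cos t))"
    unfolding d_def left_diff_distrib
    using sums_diff[OF sums_t_sinh_plus_sin sums_mult[OF sums_cosh_minus_cos, of 2]]
    by (simp add: mult.assoc)
  moreover have "d n \<ge> 0" for n
  proof (cases "n \<ge> 2")
    case False
    then have "n = 0 \<or> n = 1"
      by auto
    then show ?thesis
      using cosh_cos_coeff_simps by (auto simp: d_def)
  qed (use t cosh_cos_coeff_nonneg[of n] in \<open>simp add: d_def\<close>)
  moreover have "d 6 > 0"
    using t by (simp add: d_def cosh_cos_coeff_simps)
  ultimately show ?thesis
    using sum_le_suminf[of d "{6}"] by (simp add: sums_iff)
qed

text \<open>\<open>diag_coth_re t\<close> is \<open>Re (z coth z)\<close> at \<open>z = (1 + \<i>) t / 2\<close> (see \<open>Re_diag_coth\<close>).\<close>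

definition diag_coth_re :: "real \<Rightarrow> real" where
  "diag_coth_re t = t * (sinh t + sin t) / (2 * (cosh t - cos t))"

lemma diag_coth_re_gt_1: "t > 0 \<Longrightarrow> diag_coth_re t > 1"
  using two_cosh_minus_cos_less cosh_minus_cos_pos by (simp add: diag_coth_re_def)

lemma diag_coth_re_mono: "0 < y \<Longrightarrow> y \<le> x \<Longrightarrow> diag_coth_re y \<le> diag_coth_re x"
  using chebyshev_power_suminf[OF cosh_cos_coeff_nonneg _ _ sums_t_sinh_plus_sin sums_cosh_minus_cos
      sums_t_sinh_plus_sin sums_cosh_minus_cos, of y x]
    cosh_minus_cos_pos[of y] cosh_minus_cos_pos[of x]
  by (simp add: diag_coth_re_def divide_simps algebra_simps)

section \<open>Hyperbolic functions on the diagonal \<open>x (1 + \<i>)\<close>\<close>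

lemma sinh_complex_of_real: "sinh (complex_of_real x) = of_real (sinh x)"
  by (simp add: sinh_field_def exp_of_real[symmetric] of_real_minus[symmetric] del: of_real_minus)

lemma cosh_complex_of_real: "cosh (complex_of_real x) = of_real (cosh x)"
  by (simp add: cosh_field_def exp_of_real[symmetric] of_real_minus[symmetric] del: of_real_minus)

lemma sinh_imaginary: "sinh (\<i> * complex_of_real x) = \<i> * of_real (sin x)"
  by (simp add: sinh_conv_sin sin_of_real[symmetric])

lemma cosh_imaginary: "cosh (\<i> * complex_of_real x) = of_real (cos x)"
  by (simp add: cosh_conv_cos cos_of_real[symmetric])

lemma Complex_diag: "Complex x x = of_real x + \<i> * of_real x"
  by (simp add: complex_eq_iff)

lemma sinh_diag: "sinh (Complex x x) = Complex (sinh x * cos x) (cosh x * sin x)"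
  unfolding Complex_diag sinh_add sinh_complex_of_real cosh_complex_of_real sinh_imaginary cosh_imaginary
  by (simp add: complex_eq_iff)

lemma cosh_diag: "cosh (Complex x x) = Complex (cosh x * cos x) (sinh x * sin x)"
  unfolding Complex_diag cosh_add sinh_complex_of_real cosh_complex_of_real sinh_imaginary cosh_imaginary
  by (simp add: complex_eq_iff)

lemma cmod_sinh_diag_sq: "(cmod (sinh (Complex x x)))\<^sup>2 = (sinh x)\<^sup>2 + (sin x)\<^sup>2"
  by (simp add: sinh_diag cmod_power2 power_mult_distrib cosh_square_eq cos_squared_eq algebra_simps)

lemma Re_diag_coth:
  assumes "x > 0"
  shows "Re (Complex x x * ccoth (Complex x x)) = diag_coth_re (2 * x)"
proof -
  define sh ch sn cs where "sh = sinh x" and "ch = cosh x" and "sn = sin x" and "cs = cos x"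
  have pyth: "ch\<^sup>2 = sh\<^sup>2 + 1" "cs\<^sup>2 = 1 - sn\<^sup>2"
    by (simp_all add: sh_def ch_def sn_def cs_def cosh_square_eq cos_squared_eq)
  have "Re (Complex x x * ccoth (Complex x x))
      = (x * (ch * cs - sh * sn) * (sh * cs) + x * (sh * sn + ch * cs) * (ch * sn))
        / ((sh * cs)\<^sup>2 + (ch * sn)\<^sup>2)"
    by (simp add: ccoth_def sinh_diag cosh_diag Re_divide sh_def ch_def sn_def cs_def algebra_simps)
  also have "(sh * cs)\<^sup>2 + (ch * sn)\<^sup>2 = sh\<^sup>2 + sn\<^sup>2"
    by (simp add: power_mult_distrib pyth algebra_simps)
  also have "x * (ch * cs - sh * sn) * (sh * cs) + x * (sh * sn + ch * cs) * (ch * sn)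
      = x * (sh * ch * (cs\<^sup>2 + sn\<^sup>2) + sn * cs * (ch\<^sup>2 - sh\<^sup>2))"
    by (simp add: algebra_simps power2_eq_square)
  also have "\<dots> = x * (sh * ch + sn * cs)"
    by (simp add: pyth)
  also have "x * (sh * ch + sn * cs) / (sh\<^sup>2 + sn\<^sup>2) = diag_coth_re (2 * x)"
  proof -
    have den: "cosh (2 * x) - cos (2 * x) = 2 * (sh\<^sup>2 + sn\<^sup>2)"
      by (simp add: sh_def sn_def cosh_double cos_double_sin cosh_square_eq)
    have num: "2 * x * (sinh (2 * x) + sin (2 * x)) = 4 * (x * (sh * ch + sn * cs))"
      unfolding sh_def ch_def sn_def cs_def sinh_double sin_double by (simp add: algebra_simps)
    have "(4::real) * a / (2 * (2 * b)) = a / b" for a b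
      by (cases "b = 0") (simp_all add: field_simps)
    then show ?thesis
      by (simp only: diag_coth_re_def den num)
  qed
  finally show ?thesis .
qed

lemma cmod_diag_div_sinh_sq:
  "(cmod (Complex x x / sinh (Complex x x)))\<^sup>2 = 2 * x\<^sup>2 / ((sinh x)\<^sup>2 + (sin x)\<^sup>2)"
proof -
  have "(cmod (Complex x x))\<^sup>2 = 2 * x\<^sup>2"
    by (simp add: cmod_power2)
  then show ?thesis
    by (simp add: norm_divide power_divide cmod_sinh_diag_sq)
qed

lemma cmod_diag_div_sinh_le_1:
  assumes "x > 0"
  shows "cmod (Complex x x / sinh (Complex x x)) \<le> 1"
proof -
  have "(2 * x)\<^sup>2 \<le> 2 * ((sinh x)\<^sup>2 + (sin x)\<^sup>2)"
    using sq_le_cosh_minus_cos[of "2 * x"] assms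
    by (simp add: cosh_double cos_double_sin cosh_square_eq)
  moreover have "(sinh x)\<^sup>2 > 0"
    using assms by simp
  ultimately have "(cmod (Complex x x / sinh (Complex x x)))\<^sup>2 \<le> 1\<^sup>2"
    unfolding cmod_diag_div_sinh_sq by (simp add: divide_simps power_mult_distrib add_pos_nonneg)
  then show ?thesis
    by (rule power2_le_imp_le) simp
qed

lemma cmod_diag_div_sinh_le:
  assumes "x > 0"
  shows "cmod (Complex x x / sinh (Complex x x)) \<le> sqrt 2 * x / sinh x"
proof -
  have "(sinh x)\<^sup>2 > 0"
    using assms by simp
  then have "(cmod (Complex x x / sinh (Complex x x)))\<^sup>2 \<le> 2 * x\<^sup>2 / (sinh x)\<^sup>2"
    unfolding cmod_diag_div_sinh_sq by (intro divide_left_mono) (auto simp: add_pos_nonneg)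
  also have "\<dots> = (sqrt 2 * x / sinh x)\<^sup>2"
    by (simp add: power_divide power_mult_distrib)
  finally show ?thesis
    by (rule power2_le_imp_le) (use assms in simp)
qed

lemma csqrt_imaginary:
  assumes "c \<ge> 0"
  shows "csqrt (\<i> * of_real c) = Complex (sqrt (c / 2)) (sqrt (c / 2))"
proof (rule csqrt_unique)
  show "(Complex (sqrt (c / 2)) (sqrt (c / 2)))\<^sup>2 = \<i> * of_real c"
    using assms by (simp add: complex_eq_iff power2_eq_square)
qed (use assms in auto)

section \<open>The modified Bessel series\<close>

definition besselI_term :: "nat \<Rightarrow> real \<Rightarrow> nat \<Rightarrow> real" where
  "besselI_term m y k = (y / 2) ^ (2 * k + m) / (fact k * fact (k + m))"

definition besselI_real :: "nat \<Rightarrow> real \<Rightarrow> real" where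
  "besselI_real m y = (\<Sum>k. besselI_term m y k)"

lemma besselI_term_eq: "besselI_term m y k = (y / 2) ^ k / fact k * ((y / 2) ^ (k + m) / fact (k + m))"
  by (simp add: besselI_term_def mult_2 power_add)

lemma besselI_term_nonneg: "y \<ge> 0 \<Longrightarrow> besselI_term m y k \<ge> 0"
  by (simp add: besselI_term_def)

lemma summable_besselI_term: "summable (besselI_term m y)"
proof (rule summable_comparison_test)
  define c where "c = \<bar>y / 2\<bar>"
  have "\<bar>besselI_term m y k\<bar> \<le> c ^ m * (inverse (fact k) * (c\<^sup>2) ^ k)" for k
  proof -
    have "c ^ (2 * k + m) = c ^ m * (c\<^sup>2) ^ k"
      by (metis power_add power_mult mult.commute)
    then have "\<bar>besselI_term m y k\<bar> = c ^ m * (c\<^sup>2) ^ k / (fact k * fact (k + m))"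
      by (simp add: besselI_term_def c_def abs_mult power_abs)
    also have "\<dots> \<le> c ^ m * (c\<^sup>2) ^ k / (fact k * 1)"
      by (intro divide_left_mono mult_left_mono) (auto simp: c_def fact_ge_1)
    finally show ?thesis
      by (simp add: field_simps)
  qed
  then show "\<exists>N. \<forall>k\<ge>N. norm (besselI_term m y k) \<le> c ^ m * (inverse (fact k) * (c\<^sup>2) ^ k)"
    by auto
  show "summable (\<lambda>k. c ^ m * (inverse (fact k) * (c\<^sup>2) ^ k))"
    by (intro summable_mult summable_exp)
qed

lemma besselI_of_real: "besselI m (of_real y) = of_real (besselI_real m y)"
  using suminf_of_real[OF summable_besselI_term, of m y, where 'a = complex]
  by (simp add: besselI_def besselI_real_def besselI_term_def)

lemma norm_besselI_le: "cmod (besselI m z) \<le> besselI_real m (cmod z)"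
  unfolding besselI_def besselI_real_def
  by (rule norm_suminf_le[OF _ summable_besselI_term])
    (simp add: besselI_term_def norm_divide norm_power norm_mult)

lemma besselI_real_nonneg: "y \<ge> 0 \<Longrightarrow> besselI_real m y \<ge> 0"
  unfolding besselI_real_def by (intro suminf_nonneg summable_besselI_term besselI_term_nonneg)

lemma besselI_real_mono: "0 \<le> y \<Longrightarrow> y \<le> y' \<Longrightarrow> besselI_real m y \<le> besselI_real m y'"
  unfolding besselI_real_def
  by (intro suminf_le summable_besselI_term)
    (auto simp: besselI_term_def intro!: divide_right_mono power_mono)

lemma one_le_besselI_real_0: "1 \<le> besselI_real 0 y"
proof -
  have "besselI_term 0 y k \<ge> 0" for k
    by (simp add: besselI_term_def power_mult)
  moreover have "besselI_term 0 y 0 = 1"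
    by (simp add: besselI_term_def)
  ultimately show ?thesis
    using sum_le_suminf[OF summable_besselI_term, of "{0}" 0 y] by (simp add: besselI_real_def)
qed

text \<open>Termwise AM-GM: the \<open>k\<close>-th term of \<open>I\<^sub>m\<close> is the geometric mean of the \<open>k\<close>-th and
  \<open>(k + m)\<close>-th terms of \<open>I\<^sub>0\<close>.\<close>

lemma besselI_real_le_besselI_real_0:
  assumes "y \<ge> 0"
  shows "besselI_real m y \<le> besselI_real 0 y"
proof -
  have s0: "summable (besselI_term 0 y)" and sm: "summable (\<lambda>k. besselI_term 0 y (k + m))"
    using summable_besselI_term summable_ignore_initial_segment by blast+
  have am_gm: "X * Y \<le> (X * X + Y * Y) / 2" for X Y :: real
    using sum_squares_bound[of X Y] by (simp add: power2_eq_square)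
  have "besselI_term m y k \<le> (besselI_term 0 y k + besselI_term 0 y (k + m)) / 2" for k
    by (simp only: besselI_term_eq add_0_right am_gm)
  then have "besselI_real m y \<le> (\<Sum>k. (besselI_term 0 y k + besselI_term 0 y (k + m)) / 2)"
    unfolding besselI_real_def by (intro suminf_le summable_besselI_term summable_divide summable_add s0 sm)
  also have "\<dots> = (besselI_real 0 y + (\<Sum>k. besselI_term 0 y (k + m))) / 2"
    unfolding besselI_real_def by (simp add: suminf_divide suminf_add[OF s0 sm] summable_add[OF s0 sm])
  also have "(\<Sum>k. besselI_term 0 y (k + m)) \<le> besselI_real 0 y"
    unfolding besselI_real_def suminf_split_initial_segment[OF s0, of m]
    using assms by (simp add: sum_nonneg besselI_term_nonneg)
  finally show ?thesis
    by simp
qed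

text \<open>With \<open>e\<^sub>k = (y/2)\<^sup>k / k!\<close> we have \<open>I\<^sub>0(y) = \<Sum> e\<^sub>k\<^sup>2 \<le> (sup e\<^sub>k) \<Sum> e\<^sub>k \<le> (\<Sum> e\<^sub>k)\<^sup>2 = e\<^sup>y\<close>.\<close>

lemma besselI_real_0_le_exp:
  assumes "y \<ge> 0"
  shows "besselI_real 0 y \<le> exp y"
proof -
  define e where "e k = (y / 2) ^ k / fact k" for k
  have e_sums: "e sums exp (y / 2)"
    using exp_converges[of "y / 2"] unfolding e_def by (simp add: field_simps)
  have e_nonneg: "e k \<ge> 0" for k
    using assms by (simp add: e_def)
  have "e k \<le> exp (y / 2)" for k
    using sum_le_suminf[of e "{k}"] e_sums e_nonneg by (simp add: sums_iff)
  then have "besselI_term 0 y k \<le> exp (y / 2) * e k" for k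
    unfolding besselI_term_eq add_0_right e_def[symmetric] using e_nonneg[of k] by (rule mult_right_mono)
  then have "besselI_real 0 y \<le> (\<Sum>k. exp (y / 2) * e k)"
    unfolding besselI_real_def
    using e_sums by (intro suminf_le summable_besselI_term summable_mult) (auto simp: sums_iff)
  also have "\<dots> = exp (y / 2) * exp (y / 2)"
    using e_sums by (simp add: suminf_mult sums_iff)
  also have "\<dots> = exp y"
    by (simp flip: exp_add)
  finally show ?thesis .
qed

lemma sinh_ge_pow5: "(x::real) \<ge> 0 \<Longrightarrow> x ^ 5 / 120 \<le> sinh x"
proof -
  assume x: "x \<ge> 0"
  define f where "f n = (if even n then 0 else x ^ n / fact n)" for n
  have "(\<lambda>n. if even n then 0 else x ^ n /\<^sub>R fact n) = f"
    by (auto simp: f_def fun_eq_iff divide_inverse mult.commute)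
  then have "f sums sinh x"
    using sinh_converges[of x] by simp
  then show ?thesis
    using x sum_le_suminf[of f "{5}"] by (simp add: sums_iff f_def fact_numeral)
qed

section \<open>The channel coefficients and the conditional density\<close>

locale pzd_channel =
  fixes \<gamma> \<sigma> L :: real
  assumes gamma_pos: "\<gamma> > 0" and sigma_pos: "\<sigma> > 0" and L_pos: "L > 0"
begin

abbreviation \<beta> :: "nat \<Rightarrow> real" where
  "\<beta> \<equiv> beta_m \<gamma> \<sigma> L"

definition N0 :: real where
  "N0 = \<sigma>\<^sup>2 * L"

lemma N0_pos: "N0 > 0"
  using sigma_pos L_pos by (simp add: N0_def)

lemma beta_pos: "m > 0 \<Longrightarrow> \<beta> m > 0"
  using gamma_pos sigma_pos L_pos by (simp add: beta_m_def)

lemma beta_mono: "m \<le> n \<Longrightarrow> \<beta> m \<le> \<beta> n"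
  using gamma_pos sigma_pos L_pos by (auto simp: beta_m_def intro!: mult_right_mono)

lemma beta_sq: "(\<beta> m)\<^sup>2 = real m * (\<beta> 1)\<^sup>2"
  using gamma_pos by (simp add: beta_m_def power_mult_distrib)

lemma csqrt_channel:
  "csqrt (\<i> * of_nat m * of_real \<gamma>) / of_real \<sigma> = Complex (\<beta> m) (\<beta> m) / of_real N0"
  "csqrt (\<i> * of_nat m * of_real \<gamma> * of_real (\<sigma>\<^sup>2)) * of_real L = Complex (\<beta> m) (\<beta> m)"
proof -
  define q where "q = sqrt (real m * \<gamma> / 2)"
  have sqrt_gamma: "csqrt (\<i> * of_nat m * of_real \<gamma>) = Complex q q"
    using csqrt_imaginary[of "real m * \<gamma>"] gamma_pos by (simp add: q_def mult.assoc)
  show "csqrt (\<i> * of_nat m * of_real \<gamma>) / of_real \<sigma> = Complex (\<beta> m) (\<beta> m) / of_real N0"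
    unfolding sqrt_gamma using sigma_pos L_pos
    by (simp add: beta_m_def q_def N0_def complex_eq_iff power2_eq_square)
  have "real m * \<gamma> * \<sigma>\<^sup>2 / 2 = (real m * \<gamma> / 2) * \<sigma>\<^sup>2"
    by simp
  then have "sqrt (real m * \<gamma> * \<sigma>\<^sup>2 / 2) = q * \<sigma>"
    using sigma_pos by (simp only: q_def real_sqrt_mult) simp
  then have sqrt_gamma_sigma: "csqrt (\<i> * of_nat m * of_real \<gamma> * of_real (\<sigma>\<^sup>2)) = Complex (q * \<sigma>) (q * \<sigma>)"
    using csqrt_imaginary[of "real m * \<gamma> * \<sigma>\<^sup>2"] gamma_pos by (simp add: mult.assoc)
  show "csqrt (\<i> * of_nat m * of_real \<gamma> * of_real (\<sigma>\<^sup>2)) * of_real L = Complex (\<beta> m) (\<beta> m)"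
    unfolding sqrt_gamma_sigma by (simp add: beta_m_def q_def complex_eq_iff)
qed

lemma a_m_eq: "a_m \<gamma> \<sigma> L m = Complex (\<beta> m) (\<beta> m) * ccoth (Complex (\<beta> m) (\<beta> m)) / of_real N0"
  unfolding a_m_def csqrt_channel by simp

lemma b_m_eq: "b_m \<gamma> \<sigma> L m = Complex (\<beta> m) (\<beta> m) / sinh (Complex (\<beta> m) (\<beta> m)) / of_real N0"
  unfolding b_m_def csqrt_channel by simp

lemma Re_a_m: "m > 0 \<Longrightarrow> Re (a_m \<gamma> \<sigma> L m) = diag_coth_re (2 * \<beta> m) / N0"
  by (simp only: a_m_eq Re_divide_of_real Re_diag_coth beta_pos)

lemma Re_a_m_gt: "m > 0 \<Longrightarrow> Re (a_m \<gamma> \<sigma> L m) > 1 / N0"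
  using diag_coth_re_gt_1[of "2 * \<beta> m"] beta_pos[of m] N0_pos
  by (simp add: Re_a_m divide_strict_right_mono)

lemma Re_a_m_ge_Re_a_1: "m > 0 \<Longrightarrow> Re (a_m \<gamma> \<sigma> L 1) \<le> Re (a_m \<gamma> \<sigma> L m)"
  using diag_coth_re_mono[of "2 * \<beta> 1" "2 * \<beta> m"] beta_pos[of 1] beta_mono[of 1 m] N0_pos
  by (simp add: Re_a_m divide_right_mono)

lemma cmod_b_m: "cmod (b_m \<gamma> \<sigma> L m) = cmod (Complex (\<beta> m) (\<beta> m) / sinh (Complex (\<beta> m) (\<beta> m))) / N0"
  using N0_pos by (simp only: b_m_eq norm_divide[of _ "of_real N0"] norm_of_real)

lemma cmod_b_m_le: "m > 0 \<Longrightarrow> cmod (b_m \<gamma> \<sigma> L m) \<le> 1 / N0"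
  using cmod_diag_div_sinh_le_1[OF beta_pos] N0_pos
  by (simp only: cmod_b_m divide_right_mono less_imp_le)

definition c :: "nat \<Rightarrow> real" where
  "c m = sqrt 2 * \<beta> m / sinh (\<beta> m)"

lemma cmod_b_m_le_c: "m > 0 \<Longrightarrow> cmod (b_m \<gamma> \<sigma> L m) \<le> c m / N0"
  using cmod_diag_div_sinh_le[OF beta_pos] N0_pos
  by (simp only: cmod_b_m c_def divide_right_mono less_imp_le)

lemma c_nonneg: "m > 0 \<Longrightarrow> c m \<ge> 0"
  using beta_pos[of m] by (simp add: c_def)

lemma c_le: "m > 0 \<Longrightarrow> c m \<le> 120 * sqrt 2 / (\<beta> 1) ^ 4 * inverse ((real m)\<^sup>2)"
proof -
  assume m: "m > 0"
  have "(\<beta> m) ^ 5 / 120 > 0"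
    using beta_pos[OF m] by simp
  then have "c m \<le> sqrt 2 * \<beta> m / ((\<beta> m) ^ 5 / 120)"
    unfolding c_def using beta_pos[OF m] sinh_ge_pow5[of "\<beta> m"] by (intro divide_left_mono) auto
  also have "(\<beta> m) ^ 5 = \<beta> m * (real m)\<^sup>2 * (\<beta> 1) ^ 4"
    using beta_sq[of m] by (simp add: power_mult_distrib flip: power_mult) (simp add: eval_nat_numeral)
  finally show ?thesis
    using beta_pos[OF m] beta_pos[of 1] m by (simp add: field_simps)
qed

lemma summable_c: "summable (\<lambda>n. c (Suc n))"
proof (rule summable_comparison_test)
  have "summable (\<lambda>n. inverse ((real n)\<^sup>2))"
    by (rule inverse_power_summable) simp
  then have "summable (\<lambda>n. inverse ((real (Suc n))\<^sup>2))"
    by (subst summable_Suc_iff)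
  then show "summable (\<lambda>n. 120 * sqrt 2 / (\<beta> 1) ^ 4 * inverse ((real (Suc n))\<^sup>2))"
    by (rule summable_mult)
  show "\<exists>N. \<forall>n\<ge>N. norm (c (Suc n)) \<le> 120 * sqrt 2 / (\<beta> 1) ^ 4 * inverse ((real (Suc n))\<^sup>2)"
    using c_le c_nonneg by (metis abs_of_nonneg real_norm_def zero_less_Suc)
qed

definition S :: real where
  "S = (\<Sum>n. c (Suc n))"

lemma S_nonneg: "S \<ge> 0"
  unfolding S_def by (intro suminf_nonneg summable_c c_nonneg) simp

lemma S_eq: "sqrt 2 * (\<Sum>n. \<beta> (Suc n) / sinh (\<beta> (Suc n))) = S"
proof -
  have "summable (\<lambda>n. \<beta> (Suc n) / sinh (\<beta> (Suc n)))"
    using summable_mult[OF summable_c, of "1 / sqrt 2"] by (simp add: c_def)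
  from suminf_mult[OF this, of "sqrt 2"] show ?thesis
    by (simp add: S_def c_def)
qed

lemma k_u_eq: "k_u \<gamma> \<sigma> L = (1 + S) / (2 * pi)"
  by (simp add: k_u_def S_eq)

lemma k_u_nonneg: "k_u \<gamma> \<sigma> L \<ge> 0"
  using S_nonneg by (simp add: k_u_eq)

definition \<epsilon> :: "real \<Rightarrow> real" where
  "\<epsilon> r = exp (- (Re (a_m \<gamma> \<sigma> L 1) - 1 / N0) * r\<^sup>2)"

lemma xi_eq: "xi \<gamma> \<sigma> L r = \<epsilon> r * S"
  by (simp add: xi_def \<epsilon>_def N0_def[symmetric] S_eq[symmetric] mult.assoc)

lemma \<epsilon>_le_1: "\<epsilon> r \<le> 1"
proof -
  have "0 \<le> (Re (a_m \<gamma> \<sigma> L 1) - 1 / N0) * r\<^sup>2"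
    using Re_a_m_gt[of 1] by simp
  then show ?thesis
    unfolding \<epsilon>_def exp_le_one_iff by linarith
qed

lemma \<epsilon>_pos: "\<epsilon> r > 0"
  by (simp add: \<epsilon>_def)

lemma \<epsilon>_tendsto_0: "(\<epsilon> \<longlongrightarrow> 0) at_top"
proof -
  have "\<delta> > 0 \<Longrightarrow> ((\<lambda>r. exp (- \<delta> * r\<^sup>2)) \<longlongrightarrow> 0) at_top" for \<delta> :: real
    by real_asymp
  then show ?thesis
    unfolding \<epsilon>_def by this (use Re_a_m_gt[of 1] in simp)
qed

lemma eventually_xi_le_1: "\<forall>\<^sub>F r in at_top. xi \<gamma> \<sigma> L r \<le> 1"
proof -
  have "((\<lambda>r. \<epsilon> r * S) \<longlongrightarrow> 0) at_top"
    by (rule tendsto_mult_left_zero[OF \<epsilon>_tendsto_0])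
  then have "\<forall>\<^sub>F r in at_top. \<epsilon> r * S < 1"
    by (rule order_tendstoD) simp
  then show ?thesis
    by eventually_elim (simp add: xi_eq)
qed

lemma pRR0_eq: "pRR0 \<sigma> L r r0 = 2 * r / N0 * exp (- (r\<^sup>2 + r0\<^sup>2) / N0) * besselI_real 0 (2 * r * r0 / N0)"
  by (simp only: pRR0_def besselI_of_real Re_complex_of_real N0_def)

lemma pRR0_nonneg: "r \<ge> 0 \<Longrightarrow> r0 \<ge> 0 \<Longrightarrow> pRR0 \<sigma> L r r0 \<ge> 0"
  using N0_pos besselI_real_nonneg[of "2 * r * r0 / N0" 0] by (simp add: pRR0_eq)

lemma pRR0_le:
  assumes "r \<ge> 0" "r0 \<ge> 0"
  shows "pRR0 \<sigma> L r r0 \<le> 2 * r / N0 * exp (- (r - r0)\<^sup>2 / N0)"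
proof -
  have "pRR0 \<sigma> L r r0 \<le> 2 * r / N0 * exp (- (r\<^sup>2 + r0\<^sup>2) / N0) * exp (2 * r * r0 / N0)"
    unfolding pRR0_eq using assms N0_pos by (intro mult_left_mono besselI_real_0_le_exp) auto
  also have "\<dots> = 2 * r / N0 * exp (- (r - r0)\<^sup>2 / N0)"
    using N0_pos by (simp add: mult.assoc power2_diff field_simps flip: exp_add)
  finally show ?thesis .
qed

lemma pRR0_ge:
  assumes "r \<ge> 0"
  shows "pRR0 \<sigma> L r r0 \<ge> 2 * r / N0 * exp (- r\<^sup>2 / N0) * exp (- r0\<^sup>2 / N0)"
proof -
  have "2 * r / N0 * exp (- (r\<^sup>2 + r0\<^sup>2) / N0) * 1 \<le> pRR0 \<sigma> L r r0"
    unfolding pRR0_eq using assms N0_pos by (intro mult_left_mono one_le_besselI_real_0) auto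
  moreover have "- (r\<^sup>2 + r0\<^sup>2) / N0 = - r\<^sup>2 / N0 + - r0\<^sup>2 / N0"
    by (simp add: diff_divide_distrib)
  then have "exp (- (r\<^sup>2 + r0\<^sup>2) / N0) = exp (- r\<^sup>2 / N0) * exp (- r0\<^sup>2 / N0)"
    by (simp only: exp_add)
  ultimately show ?thesis
    by (simp add: mult.assoc)
qed

lemma cmod_besselI_Cm_le:
  assumes "r \<ge> 0" "r0 \<ge> 0" "m > 0"
  shows "cmod (besselI m (2 * b_m \<gamma> \<sigma> L m * of_real (r0 * r))) \<le> besselI_real 0 (2 * r * r0 / N0)"
proof -
  have "cmod (b_m \<gamma> \<sigma> L m) * (2 * r * r0) \<le> 1 / N0 * (2 * r * r0)"
    using cmod_b_m_le[OF assms(3)] assms by (intro mult_right_mono) auto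
  then have "cmod (2 * b_m \<gamma> \<sigma> L m * of_real (r0 * r)) \<le> 2 * r * r0 / N0"
    using assms by (simp add: norm_mult mult_ac)
  then have "besselI_real m (cmod (2 * b_m \<gamma> \<sigma> L m * of_real (r0 * r))) \<le> besselI_real m (2 * r * r0 / N0)"
    by (intro besselI_real_mono) auto
  also have "\<dots> \<le> besselI_real 0 (2 * r * r0 / N0)"
    using assms N0_pos by (intro besselI_real_le_besselI_real_0) auto
  finally show ?thesis
    using norm_besselI_le order_trans by blast
qed

lemma exp_Re_a_m_le:
  assumes "m > 0"
  shows "exp (- Re (a_m \<gamma> \<sigma> L m) * (r\<^sup>2 + r0\<^sup>2)) \<le> \<epsilon> r * exp (- (r\<^sup>2 + r0\<^sup>2) / N0)"
proof -
  have "- Re (a_m \<gamma> \<sigma> L m) * (r\<^sup>2 + r0\<^sup>2) \<le> - (Re (a_m \<gamma> \<sigma> L 1) - 1 / N0) * r\<^sup>2 + - (r\<^sup>2 + r0\<^sup>2) / N0"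
    using mult_right_mono[OF Re_a_m_ge_Re_a_1[OF assms], of "r\<^sup>2"]
      mult_right_mono[OF less_imp_le[OF Re_a_m_gt[OF assms]], of "r0\<^sup>2"]
    by (simp add: algebra_simps add_divide_distrib diff_divide_distrib)
  then show ?thesis
    by (simp add: \<epsilon>_def flip: exp_add)
qed

lemma cmod_Cm_le:
  assumes r: "r \<ge> 0" and r0: "r0 \<ge> 0" and m: "m > 0"
  shows "cmod (Cm \<gamma> \<sigma> L m r r0) \<le> c m / 2 * \<epsilon> r * pRR0 \<sigma> L r r0"
proof -
  define a b where "a = a_m \<gamma> \<sigma> L m" and "b = b_m \<gamma> \<sigma> L m"
  have "cmod (Cm \<gamma> \<sigma> L m r r0)
      = r * cmod b * exp (- Re a * (r\<^sup>2 + r0\<^sup>2)) * cmod (besselI m (2 * b * of_real (r0 * r)))"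
    using r by (simp add: Cm_def a_def b_def norm_mult)
  also have "\<dots> \<le> r * (c m / N0) * (\<epsilon> r * exp (- (r\<^sup>2 + r0\<^sup>2) / N0)) * besselI_real 0 (2 * r * r0 / N0)"
    unfolding a_def b_def
  proof (rule mult_mono[OF mult_mono[OF _ exp_Re_a_m_le[OF m]] cmod_besselI_Cm_le[OF r r0 m]])
    show "r * cmod (b_m \<gamma> \<sigma> L m) \<le> r * (c m / N0)"
      using r cmod_b_m_le_c[OF m] by (rule mult_left_mono[rotated])
    show "0 \<le> r * (c m / N0) * (\<epsilon> r * exp (- (r\<^sup>2 + r0\<^sup>2) / N0))"
      using r c_nonneg[OF m] N0_pos \<epsilon>_pos[of r] by simp
  qed (use r c_nonneg[OF m] N0_pos in auto)
  also have "\<dots> = c m / 2 * \<epsilon> r * pRR0 \<sigma> L r r0"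
    by (simp add: pRR0_eq)
  finally show ?thesis .
qed

lemma pcond_approx:
  assumes "r \<ge> 0" "r0 \<ge> 0"
  shows "\<bar>pcond \<gamma> \<sigma> L r \<phi> r0 \<phi>0 - pRR0 \<sigma> L r r0 / (2 * pi)\<bar> \<le> \<epsilon> r * S * pRR0 \<sigma> L r r0 / (2 * pi)"
proof -
  define t where "t n = Re (Cm \<gamma> \<sigma> L (Suc n) r r0
      * exp (\<i> * of_nat (Suc n) * of_real (\<phi> - \<phi>0 - \<gamma> * r0\<^sup>2 * L)))" for n
  define B where "B n = c (Suc n) * (\<epsilon> r * pRR0 \<sigma> L r r0 / 2)" for n
  have "\<bar>t n\<bar> \<le> B n" for n
  proof -
    have "\<bar>t n\<bar> \<le> cmod (Cm \<gamma> \<sigma> L (Suc n) r r0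
        * exp (\<i> * of_nat (Suc n) * of_real (\<phi> - \<phi>0 - \<gamma> * r0\<^sup>2 * L)))"
      unfolding t_def by (rule abs_Re_le_cmod)
    also have "\<dots> = cmod (Cm \<gamma> \<sigma> L (Suc n) r r0)"
      by (simp add: norm_mult)
    also have "\<dots> \<le> B n"
      using cmod_Cm_le[OF assms, of "Suc n"] by (simp add: B_def)
    finally show ?thesis .
  qed
  moreover have B_sums: "B sums (S * (\<epsilon> r * pRR0 \<sigma> L r r0 / 2))"
    unfolding B_def S_def by (intro sums_mult2 summable_sums summable_c)
  ultimately have "\<bar>\<Sum>n. t n\<bar> \<le> S * (\<epsilon> r * pRR0 \<sigma> L r r0 / 2)"
    using norm_suminf_le[of t B] by (simp add: sums_iff)
  then show ?thesis
    unfolding pcond_def t_def[symmetric] by (simp add: abs_divide field_simps)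
qed

lemma pcond_le:
  assumes "r \<ge> 0" "r0 \<ge> 0"
  shows "\<bar>pcond \<gamma> \<sigma> L r \<phi> r0 \<phi>0\<bar> \<le> k_u \<gamma> \<sigma> L * pRR0 \<sigma> L r r0"
proof -
  have "\<epsilon> r * S * pRR0 \<sigma> L r r0 \<le> 1 * S * pRR0 \<sigma> L r r0"
    using \<epsilon>_le_1 S_nonneg pRR0_nonneg[OF assms] by (intro mult_right_mono) auto
  then show ?thesis
    using pcond_approx[OF assms, of \<phi> \<phi>0] pRR0_nonneg[OF assms] by (simp add: k_u_eq field_simps)
qed

lemma pcond_ge:
  assumes "r \<ge> 0" "r0 \<ge> 0"
  shows "pcond \<gamma> \<sigma> L r \<phi> r0 \<phi>0 \<ge> (1 - xi \<gamma> \<sigma> L r) * pRR0 \<sigma> L r r0 / (2 * pi)"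
  using pcond_approx[OF assms, of \<phi> \<phi>0] by (simp add: xi_eq field_simps)

end

section \<open>Integration against the input law\<close>

lemma borel_measurable_besselI [measurable]: "besselI m \<in> borel_measurable borel"
proof -
  have "(\<lambda>z. \<Sum>k. (z / 2) ^ (2 * k + m) / complex_of_real (fact k * fact (k + m))) \<in> borel_measurable borel"
    by measurable
  then show ?thesis
    by (simp add: besselI_def[abs_def])
qed

lemma borel_measurable_besselI_comp [measurable (raw)]:
  "f \<in> borel_measurable M \<Longrightarrow> (\<lambda>x. besselI m (f x)) \<in> borel_measurable M"
  using measurable_compose[OF _ borel_measurable_besselI] by blast

lemma borel_measurable_pRR0 [measurable]: "pRR0 \<sigma> L r \<in> borel_measurable borel"
  unfolding pRR0_def[abs_def] by measurable

lemma borel_measurable_pcond: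
  "(\<lambda>x :: real \<times> real. pcond \<gamma> \<sigma> L r \<phi> (fst x) (snd x)) \<in> borel_measurable borel"
proof -
  have "(\<lambda>x :: real \<times> real. pcond \<gamma> \<sigma> L r \<phi> (fst x) (snd x)) \<in> borel_measurable (borel \<Otimes>\<^sub>M borel)"
    unfolding pcond_def Cm_def by measurable
  then show ?thesis
    by (simp add: borel_prod)
qed

lemma measure_gt_le_cost:
  fixes F :: "real measure" and C :: "real \<Rightarrow> real"
  assumes "finite_measure F" "sets F = sets borel"
    and mono: "mono_on {0..} C" and cost: "(\<integral>\<^sup>+ x. ennreal (C x) \<partial>F) \<le> ennreal A"
    and "A \<ge> 0" "t \<ge> 0" "C t > 0"
  shows "measure F {t<..} \<le> A / C t"
proof -
  have "ennreal (C t * measure F {t<..}) = (\<integral>\<^sup>+ x. ennreal (C t) * indicator {t<..} x \<partial>F)"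
    using assms by (simp add: finite_measure.emeasure_eq_measure ennreal_mult nn_integral_cmult_indicator)
  also have "\<dots> \<le> (\<integral>\<^sup>+ x. ennreal (C x) \<partial>F)"
  proof (rule nn_integral_mono)
    fix x
    show "ennreal (C t) * indicator {t<..} x \<le> ennreal (C x)"
      using mono_onD[OF mono, of t x] assms by (cases "t < x") (auto intro: ennreal_leI)
  qed
  also note cost
  finally have "C t * measure F {t<..} \<le> A"
    using assms by (simp add: ennreal_le_iff)
  then show ?thesis
    using assms by (simp add: pos_le_divide_eq mult.commute)
qed

locale pzd_input = pzd_channel + prob_space M for M :: "(real \<times> real) measure" +
  assumes sets_M: "sets M = sets borel" and amplitude_nonneg: "AE x in M. fst x \<ge> 0"
begin

abbreviation amp_law :: "real measure" where
  "amp_law \<equiv> distr M lborel fst"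

lemma borel_measurable_M: "borel_measurable M = borel_measurable (borel :: (real \<times> real) measure)"
  by (rule measurable_cong_sets) (simp_all add: sets_M)

lemma measurable_fst_M [measurable]: "fst \<in> measurable M borel"
proof -
  have "measurable M borel = measurable (borel \<Otimes>\<^sub>M borel :: (real \<times> real) measure) (borel :: real measure)"
    by (rule measurable_cong_sets) (metis sets_M borel_prod, simp)
  then show ?thesis
    by simp
qed

sublocale amp: prob_space amp_law
  by (rule prob_space_distr) simp

lemma measure_amp_law_UNIV: "measure amp_law UNIV = 1"
  using amp.prob_space by simp

lemma AE_amp_law_nonneg: "AE r0 in amp_law. r0 \<ge> 0"
  using amplitude_nonneg by (subst AE_distr_iff) auto

lemma integrable_amp_law_pRR0: "r \<ge> 0 \<Longrightarrow> integrable amp_law (pRR0 \<sigma> L r)"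
proof (rule amp.integrable_const_bound[where B = "2 * r / N0"])
  assume "r \<ge> 0"
  show "AE r0 in amp_law. norm (pRR0 \<sigma> L r r0) \<le> 2 * r / N0"
    using AE_amp_law_nonneg
  proof eventually_elim
    case (elim r0)
    have "pRR0 \<sigma> L r r0 \<le> 2 * r / N0 * exp (- (r - r0)\<^sup>2 / N0)"
      using \<open>r \<ge> 0\<close> elim by (rule pRR0_le)
    also have "\<dots> \<le> 2 * r / N0 * 1"
      using \<open>r \<ge> 0\<close> N0_pos by (intro mult_left_mono) auto
    finally show ?case
      using pRR0_nonneg[OF \<open>r \<ge> 0\<close> elim] by simp
  qed
qed simp

lemma p_amp_eq: "p_amp \<sigma> L M r = (\<integral>x. pRR0 \<sigma> L r (fst x) \<partial>M)"
  unfolding p_amp_def by (rule integral_distr) simp_all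

lemma integrable_pRR0_fst: "r \<ge> 0 \<Longrightarrow> integrable M (\<lambda>x. pRR0 \<sigma> L r (fst x))"
  using integrable_amp_law_pRR0 by (subst (asm) integrable_distr_eq) simp_all

lemma integrable_pcond:
  assumes "r \<ge> 0"
  shows "integrable M (\<lambda>x. pcond \<gamma> \<sigma> L r \<phi> (fst x) (snd x))"
proof (rule Bochner_Integration.integrable_bound[OF integrable_mult_right[OF integrable_pRR0_fst[OF assms]]])
  show "(\<lambda>x. pcond \<gamma> \<sigma> L r \<phi> (fst x) (snd x)) \<in> borel_measurable M"
    unfolding borel_measurable_M by (rule borel_measurable_pcond)
  show "AE x in M. norm (pcond \<gamma> \<sigma> L r \<phi> (fst x) (snd x)) \<le> norm (k_u \<gamma> \<sigma> L * pRR0 \<sigma> L r (fst x))"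
    using amplitude_nonneg
    by eventually_elim (use pcond_le[OF assms] k_u_nonneg pRR0_nonneg[OF assms] in auto)
qed

lemma p_out_le: "r \<ge> 0 \<Longrightarrow> p_out \<gamma> \<sigma> L M r \<phi> \<le> k_u \<gamma> \<sigma> L * p_amp \<sigma> L M r"
  unfolding p_out_def p_amp_eq integral_mult_right_zero[symmetric]
  using amplitude_nonneg
  by (intro integral_mono_AE integrable_pcond integrable_mult_right integrable_pRR0_fst)
    (auto elim!: eventually_mono intro: order_trans[OF abs_ge_self pcond_le])

lemma p_out_ge:
  "r \<ge> 0 \<Longrightarrow> (1 - xi \<gamma> \<sigma> L r) / (2 * pi) * p_amp \<sigma> L M r \<le> p_out \<gamma> \<sigma> L M r \<phi>"
  unfolding p_out_def p_amp_eq integral_mult_right_zero[symmetric]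
  using amplitude_nonneg
  by (intro integral_mono_AE integrable_pcond integrable_mult_right integrable_pRR0_fst)
    (auto elim!: eventually_mono dest: pcond_ge[where \<phi> = \<phi>] simp: field_simps)

lemma p_amp_le_of_support:
  assumes "in_P \<rho> amp_law" "r \<ge> 0"
  shows "p_amp \<sigma> L M r \<le> 2 * r / N0 * exp (- (r\<^sup>2 - 2 * r * \<rho>) / N0)"
proof -
  have "AE r0 in amp_law. r0 \<in> {0..\<rho>}"
    using assms(1) by (intro amp.AE_prob_1) (simp add: in_P_def)
  then have "AE r0 in amp_law. pRR0 \<sigma> L r r0 \<le> 2 * r / N0 * exp (- (r\<^sup>2 - 2 * r * \<rho>) / N0)"
  proof eventually_elim
    case (elim r0)
    have "2 * r * r0 \<le> 2 * r * \<rho>"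
      using elim assms(2) by (intro mult_left_mono) auto
    then have "- (r - r0)\<^sup>2 \<le> - (r\<^sup>2 - 2 * r * \<rho>)"
      using zero_le_power2[of r0] unfolding power2_diff by linarith
    then have "- (r - r0)\<^sup>2 / N0 \<le> - (r\<^sup>2 - 2 * r * \<rho>) / N0"
      using N0_pos by (intro divide_right_mono) auto
    then have "2 * r / N0 * exp (- (r - r0)\<^sup>2 / N0) \<le> 2 * r / N0 * exp (- (r\<^sup>2 - 2 * r * \<rho>) / N0)"
      using assms(2) N0_pos by (intro mult_left_mono) auto
    then show ?case
      using pRR0_le[OF assms(2), of r0] elim by auto
  qed
  then have "p_amp \<sigma> L M r \<le> (\<integral>r0. 2 * r / N0 * exp (- (r\<^sup>2 - 2 * r * \<rho>) / N0) \<partial>amp_law)"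
    unfolding p_amp_def by (intro integral_mono_AE integrable_amp_law_pRR0 assms(2)) auto
  then show ?thesis
    by (simp add: measure_amp_law_UNIV)
qed

lemma p_amp_le_cost:
  assumes "in_A C A amp_law" "A > 0" "r > 0" "C (r / 2) > 0"
  shows "p_amp \<sigma> L M r \<le> 2 * r / N0 * (exp (- r\<^sup>2 / (4 * N0)) + A / C (r / 2))"
proof -
  define K e where "K = 2 * r / N0" and "e = exp (- r\<^sup>2 / (4 * N0))"
  have K_nonneg: "K \<ge> 0" and e_nonneg: "e \<ge> 0"
    using assms(3) N0_pos by (simp_all add: K_def e_def)
  have "AE r0 in amp_law. pRR0 \<sigma> L r r0 \<le> K * e + K * indicator {r / 2<..} r0"
    using AE_amp_law_nonneg
  proof eventually_elim
    case (elim r0)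
    have "pRR0 \<sigma> L r r0 \<le> K * exp (- (r - r0)\<^sup>2 / N0)"
      unfolding K_def using assms(3) elim by (intro pRR0_le) auto
    also have "\<dots> \<le> K * e + K * indicator {r / 2<..} r0"
    proof (cases "r / 2 < r0")
      case True
      have "K * exp (- (r - r0)\<^sup>2 / N0) \<le> K * 1"
        using K_nonneg N0_pos by (intro mult_left_mono) auto
      then show ?thesis
        using True K_nonneg e_nonneg by (simp add: add_increasing)
    next
      case False
      then have "(r / 2)\<^sup>2 \<le> (r - r0)\<^sup>2"
        using assms(3) by (intro power_mono) auto
      then have "exp (- (r - r0)\<^sup>2 / N0) \<le> e"
        using N0_pos by (simp add: e_def power_divide field_simps)
      then show ?thesis
        using False K_nonneg by (simp add: mult_left_mono)
    qed
    finally show ?case .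
  qed
  then have "p_amp \<sigma> L M r \<le> (\<integral>r0. K * e + K * indicator {r / 2<..} r0 \<partial>amp_law)"
    unfolding p_amp_def using assms(3)
    by (intro integral_mono_AE integrable_amp_law_pRR0 Bochner_Integration.integrable_add
        integrable_mult_right integrable_real_indicator amp.integrable_const)
      (auto simp: amp.emeasure_finite less_top[symmetric])
  also have "\<dots> = K * e + K * measure amp_law {r / 2<..}"
    by (subst Bochner_Integration.integral_add)
      (auto simp: measure_amp_law_UNIV amp.emeasure_finite less_top[symmetric])
  also have "\<dots> \<le> K * e + K * (A / C (r / 2))"
    using assms K_nonneg unfolding in_A_def admissible_cost_def
    by (intro add_left_mono mult_left_mono measure_gt_le_cost) auto
  finally show ?thesis
    by (simp add: K_def e_def distrib_left)
qed

lemma p_amp_ge: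
  assumes "r \<ge> 0"
  shows "2 * (\<integral>r0. exp (- r0\<^sup>2 / N0) \<partial>amp_law) * r / N0 * exp (- r\<^sup>2 / N0) \<le> p_amp \<sigma> L M r"
proof -
  have "integrable amp_law (\<lambda>r0. exp (- r0\<^sup>2 / N0))"
    using N0_pos by (intro amp.integrable_const_bound[where B = 1]) auto
  then have "(\<integral>r0. 2 * r / N0 * exp (- r\<^sup>2 / N0) * exp (- r0\<^sup>2 / N0) \<partial>amp_law) \<le> p_amp \<sigma> L M r"
    unfolding p_amp_def using pRR0_ge[OF assms]
    by (intro integral_mono integrable_mult_right integrable_amp_law_pRR0 assms) auto
  then show ?thesis
    by (simp add: mult_ac)
qed

lemma p_out_le_of_support:
  assumes "in_P \<rho> amp_law" "r \<ge> 0"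
  shows "p_out \<gamma> \<sigma> L M r \<phi> \<le> 2 * k_u \<gamma> \<sigma> L * r / N0 * exp (- (r\<^sup>2 - 2 * r * \<rho>) / N0)"
proof -
  have "p_out \<gamma> \<sigma> L M r \<phi> \<le> k_u \<gamma> \<sigma> L * p_amp \<sigma> L M r"
    using assms(2) by (rule p_out_le)
  also have "\<dots> \<le> k_u \<gamma> \<sigma> L * (2 * r / N0 * exp (- (r\<^sup>2 - 2 * r * \<rho>) / N0))"
    by (intro mult_left_mono p_amp_le_of_support assms k_u_nonneg)
  finally show ?thesis
    by (simp add: mult_ac)
qed

lemma p_out_le_cost:
  assumes "in_A C A amp_law" "A > 0" "r > 0" "C (r / 2) > 0"
  shows "p_out \<gamma> \<sigma> L M r \<phi> \<le> 2 * k_u \<gamma> \<sigma> L * r / N0 * (exp (- r\<^sup>2 / (4 * N0)) + A / C (r / 2))"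
proof -
  have "p_out \<gamma> \<sigma> L M r \<phi> \<le> k_u \<gamma> \<sigma> L * p_amp \<sigma> L M r"
    using assms(3) by (intro p_out_le) simp
  also have "\<dots> \<le> k_u \<gamma> \<sigma> L * (2 * r / N0 * (exp (- r\<^sup>2 / (4 * N0)) + A / C (r / 2)))"
    by (intro mult_left_mono p_amp_le_cost assms k_u_nonneg)
  finally show ?thesis
    by (simp add: algebra_simps)
qed

lemma p_out_ge_k1:
  assumes "r \<ge> 0" "xi \<gamma> \<sigma> L r \<le> 1"
  shows "(\<integral>r0. exp (- r0\<^sup>2 / N0) \<partial>amp_law) * r / (pi * N0) * exp (- r\<^sup>2 / N0) * (1 - xi \<gamma> \<sigma> L r)
    \<le> p_out \<gamma> \<sigma> L M r \<phi>"
proof -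
  have "(\<integral>r0. exp (- r0\<^sup>2 / N0) \<partial>amp_law) * r / (pi * N0) * exp (- r\<^sup>2 / N0) * (1 - xi \<gamma> \<sigma> L r)
      = (1 - xi \<gamma> \<sigma> L r) / (2 * pi) * (2 * (\<integral>r0. exp (- r0\<^sup>2 / N0) \<partial>amp_law) * r / N0 * exp (- r\<^sup>2 / N0))"
    using N0_pos by (simp add: field_simps)
  also have "\<dots> \<le> (1 - xi \<gamma> \<sigma> L r) / (2 * pi) * p_amp \<sigma> L M r"
    using assms by (intro mult_left_mono p_amp_ge) auto
  also have "\<dots> \<le> p_out \<gamma> \<sigma> L M r \<phi>"
    using assms(1) by (rule p_out_ge)
  finally show ?thesis .
qed

end

theorem mainTheorem8:
  fixes \<gamma> \<sigma> L :: real and M :: "(real \<times> real) measure"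
  assumes "\<gamma> > 0" "\<sigma> > 0" "L > 0"
    and "prob_space M" and "sets M = sets borel"
    and "AE x in M. fst x \<ge> 0"
  shows
    "(\<forall>\<rho>>0. in_P \<rho> (distr M lborel fst) \<longrightarrow>
        (\<forall>r\<ge>0. \<forall>\<phi>. p_out \<gamma> \<sigma> L M r \<phi>
            \<le> 2 * k_u \<gamma> \<sigma> L * r / (\<sigma>^2 * L) * exp (- (r^2 - 2 * r * \<rho>) / (\<sigma>^2 * L))))
   \<and> (\<forall>(A::real) (C::real\<Rightarrow>real). A > 0 \<and> in_A C A (distr M lborel fst) \<longrightarrow>
        (\<forall>r>0. C (r / 2) > 0 \<longrightarrow> (\<forall>\<phi>. p_out \<gamma> \<sigma> L M r \<phi>
            \<le> 2 * k_u \<gamma> \<sigma> L * r / (\<sigma>^2 * L)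
               * (exp (- (r^2) / (4 * \<sigma>^2 * L)) + A / C (r / 2)))))
   \<and> (\<forall>\<rho> (A::real) (C::real\<Rightarrow>real). (\<rho> > 0 \<and> in_P \<rho> (distr M lborel fst))
              \<or> (A > 0 \<and> in_A C A (distr M lborel fst))
              \<or> (\<rho> > 0 \<and> A > 0 \<and> in_P \<rho> (distr M lborel fst) \<and> in_A' C A (distr M lborel fst)) \<longrightarrow>
        (let k1 = (\<integral>r0. exp (- (r0^2) / (\<sigma>^2 * L)) \<partial>(distr M lborel fst)) in
          (\<forall>\<^sub>F r in at_top. \<forall>\<phi>. p_out \<gamma> \<sigma> L M r \<phi>
              \<ge> k1 * r / (pi * \<sigma>^2 * L) * exp (- (r^2) / (\<sigma>^2 * L)) * (1 - xi \<gamma> \<sigma> L r))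
          \<and> (\<forall>r\<ge>0. p_amp \<sigma> L M r \<ge> 2 * k1 * r / (\<sigma>^2 * L) * exp (- (r^2) / (\<sigma>^2 * L)))))"
proof -
  interpret pzd_input \<gamma> \<sigma> L M
    using assms by (intro pzd_input.intro pzd_channel.intro pzd_input_axioms.intro) auto
  \<comment> \<open>The lower bounds hold for every input law: part (3) does not use its membership hypotheses.\<close>
  have lower: "\<forall>\<^sub>F r in at_top. \<forall>\<phi>. (\<integral>r0. exp (- r0\<^sup>2 / N0) \<partial>amp_law) * r / (pi * N0) * exp (- r\<^sup>2 / N0)
      * (1 - xi \<gamma> \<sigma> L r) \<le> p_out \<gamma> \<sigma> L M r \<phi>"
    using eventually_xi_le_1 eventually_ge_at_top[of 0] by eventually_elim (blast intro: p_out_ge_k1)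
  show ?thesis
    using p_out_le_of_support p_out_le_cost lower p_amp_ge unfolding Let_def N0_def
    by (auto simp: mult.assoc)
qed

end
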